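(* Consider the mini-batch method described in the context, and suppose Assumption A1 holds. Let $\tau>0$ be arbitrary, $A_\tau=8L^2+16\tau L^2$, $B_\tau=8\tau+8$. Then for any $\check x\in\mathcal{X}$, any $z\in\mathbb{R}^d$, all $i\in V$ and all $k\ge0$, $$\|x_i(k+1)-\check x\|^2\le(1+A_\tau\alpha_k^2)\|v_i(k)-\check x\|^2-2\alpha_k\big(f_i(z)-f_i(\check x)\big)-\tfrac34\|\psi_i^1(k)-v_i(k)\|^2+\Big(\tfrac{3}{8\tau}+2\alpha_kL\Big)\|v_i(k)-z\|^2+B_\tau\alpha_k^2G_f^2.$$
   Context: Setting. There are $m$ agents $V=\{1,\dots,m\}$. Agent $i$ has $f_i:\mathbb{R}^d\to\mathbb{R}$ and $\mathcal{X}_i=\bigcap_{j\in I_i}\mathcal{X}_i^j$, with $I_1,\dots,I_m$ a partition of a finite index set; $\mathcal{X}=\bigcap_i\mathcal{X}_i$. $\Pi_Y$ is Euclidean projection onto closed convex $Y$. With weight matrices $W(k)$, stepsizes $\alpha_k>0$ and batch size $b\ge1$, the mini-batch method starts from $x_i(0)$ and for $k\ge0$ sets $v_i(k)=\sum_j[W(k)]_{ij}x_j(k)$, $\psi_i^0(k)=v_i(k)-\alpha_k\nabla f_i(v_i(k))$, $\psi_i^r(k)=\Pi_{\mathcal{X}_i^{\Omega_i^r(k)}}[\psi_i^{r-1}(k)]$ for $r=1,\dots,b$, and $x_i(k+1)=\psi_i^b(k)$, where each $\Omega_i^r(k)$ takes values in $I_i$ (the claim holds for every realization). (A1) Each $\mathcal{X}_i^j$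 is closed and convex; each $f_i$ is convex and differentiable with $\|\nabla f_i(x)-\nabla f_i(y)\|\le L\|x-y\|$ for all $x,y$; and $\|\nabla f_i(x)\|\le G_f$ for all $x\in\mathcal{X}$, $i\in V$. *)

theory Defs
  imports "HOL-Analysis.Analysis"
begin

end

theory Submission
  imports Defs
begin

text \<open>
  The first projection, applied to the gradient step \<open>v - \<alpha> \<nabla>f v\<close>, loses at least
  \<open>\<parallel>\<psi>\<^sup>1 - \<psi>\<^sup>0\<parallel>\<^sup>2\<close> relative to any feasible point, and the later projections of the mini-batch
  do not increase the distance to it. Expanding the gradient step leaves the term
  \<open>-2\<alpha> \<langle>\<nabla>f v, \<psi>\<^sup>1 - x\<rangle>\<close>, which is split at \<open>v\<close> and \<open>z\<close>: the part along \<open>z - x\<close>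
  is controlled by convexity and the Lipschitz gradient, the other two by Young's
  inequality, and the resulting \<open>\<alpha>\<^sup>2\<parallel>\<nabla>f v\<parallel>\<^sup>2\<close> by \<open>\<parallel>\<nabla>f v\<parallel> \<le> G + L\<parallel>v - x\<parallel>\<close>.
\<close>

lemma convex_on_has_derivative_ge:
  fixes f :: "'a::euclidean_space \<Rightarrow> real"
  assumes cf: "convex_on UNIV f" and d: "(f has_derivative (\<lambda>h. g \<bullet> h)) (at x)"
  shows "f x + g \<bullet> (y - x) \<le> f y"
proof -
  define h where "h t = f (x + t *\<^sub>R (y - x))" for t :: real
  have "convex_on UNIV h"
  proof (rule convex_onI)
    fix t a b :: real assume t: "0 < t" "t < 1"
    have "x + ((1 - t) *\<^sub>R a + t *\<^sub>R b) *\<^sub>R (y - x)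
        = (1 - t) *\<^sub>R (x + a *\<^sub>R (y - x)) + t *\<^sub>R (x + b *\<^sub>R (y - x))"
      by (simp add: algebra_simps)
    then show "h ((1 - t) *\<^sub>R a + t *\<^sub>R b) \<le> (1 - t) * h a + t * h b"
      unfolding h_def using convex_onD[OF cf, of t] t by simp
  qed simp
  moreover have "(h has_field_derivative (g \<bullet> (y - x))) (at 0)"
  proof -
    have "((\<lambda>t::real. x + t *\<^sub>R (y - x)) has_derivative (\<lambda>t. t *\<^sub>R (y - x))) (at 0)"
      by (auto intro!: derivative_eq_intros)
    moreover have "(f has_derivative (\<lambda>h. g \<bullet> h)) (at ((\<lambda>t::real. x + t *\<^sub>R (y - x)) 0))"
      using d by simp
    ultimately have "(h has_derivative (\<lambda>t. g \<bullet> (t *\<^sub>R (y - x)))) (at 0)"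
      unfolding h_def using diff_chain_at by (fastforce simp: o_def)
    moreover have "(\<lambda>t. g \<bullet> (t *\<^sub>R (y - x))) = (*) (g \<bullet> (y - x))"
      by (auto simp: algebra_simps)
    ultimately show ?thesis
      by (simp add: has_field_derivative_def)
  qed
  ultimately have "g \<bullet> (y - x) \<le> h 1 - h 0"
    using convex_on_imp_above_tangent[of UNIV h 0 1] by simp
  then show ?thesis unfolding h_def by simp
qed

lemma convex_on_lipschitz_gradient_three_point:
  fixes f :: "'a::euclidean_space \<Rightarrow> real"
  assumes cf: "convex_on UNIV f"
    and d: "\<And>y. (f has_derivative (\<lambda>h. g y \<bullet> h)) (at y)"
    and lip: "\<And>y w. norm (g y - g w) \<le> L * norm (y - w)"
  shows "f z - f x \<le> g v \<bullet> (z - x) + L * (norm (v - z))\<^sup>2"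
proof -
  have tangent_v: "f v + g v \<bullet> (x - v) \<le> f x"
    and tangent_z: "f z + g z \<bullet> (v - z) \<le> f v"
    by (rule convex_on_has_derivative_ge[OF cf d])+
  have "\<bar>(g z - g v) \<bullet> (v - z)\<bar> \<le> norm (g z - g v) * norm (v - z)"
    by (rule Cauchy_Schwarz_ineq2)
  also have "\<dots> \<le> L * (norm (v - z))\<^sup>2"
    using mult_right_mono[OF lip[of z v], of "norm (v - z)"]
    by (simp add: norm_minus_commute power2_eq_square)
  finally have "g v \<bullet> (v - z) - L * (norm (v - z))\<^sup>2 \<le> g z \<bullet> (v - z)"
    by (simp add: inner_diff_left)
  moreover have "g v \<bullet> (z - x) = g v \<bullet> (v - x) - g v \<bullet> (v - z)"
    by (simp add: inner_diff_right)
  ultimately show ?thesis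
    using tangent_v tangent_z by (simp add: inner_diff_right)
qed

lemma lipschitz_norm_sq_le:
  fixes g :: "'a::real_normed_vector \<Rightarrow> 'b::real_normed_vector"
  assumes lip: "\<And>y w. norm (g y - g w) \<le> L * norm (y - w)" and G: "norm (g x) \<le> G"
  shows "(norm (g v))\<^sup>2 \<le> 2 * G\<^sup>2 + 2 * L\<^sup>2 * (norm (v - x))\<^sup>2"
proof -
  have "norm (g v) \<le> G + L * norm (v - x)"
    using norm_triangle_sub[of "g v" "g x"] G lip[of v x] by linarith
  then have "(norm (g v))\<^sup>2 \<le> (G + L * norm (v - x))\<^sup>2"
    by (simp add: power_mono)
  also have "\<dots> \<le> 2 * G\<^sup>2 + 2 * L\<^sup>2 * (norm (v - x))\<^sup>2"
    using zero_le_power2[of "G - L * norm (v - x)"] by (simp add: power2_eq_square algebra_simps)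
  finally show ?thesis .
qed

lemma inner_le_weighted_norms:
  fixes u w :: "'a::real_inner"
  assumes "e > 0"
  shows "2 * (u \<bullet> w) \<le> e * (norm u)\<^sup>2 + (norm w)\<^sup>2 / e"
proof -
  have "0 \<le> (e * norm u - norm w)\<^sup>2 / e" using assms by simp
  also have "\<dots> = e * (norm u)\<^sup>2 + (norm w)\<^sup>2 / e - 2 * (norm u * norm w)"
    using assms by (simp add: power2_eq_square field_simps)
  finally show ?thesis using norm_cauchy_schwarz[of u w] by linarith
qed

lemma closest_point_dist_le:
  assumes "convex S" "closed S" "y \<in> S"
  shows "norm (closest_point S u - y) \<le> norm (u - y)"
  using closest_point_lipschitz[of S u y] closest_point_self[OF assms(3)] assms
  by (auto simp: dist_norm)

lemma closest_point_iterates_dist_le: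
  assumes "l \<le> n"
    and step: "\<And>r. l \<le> r \<Longrightarrow> r < n \<Longrightarrow> p (Suc r) = closest_point (S r) (p r)"
    and S: "\<And>r. l \<le> r \<Longrightarrow> r < n \<Longrightarrow> convex (S r) \<and> closed (S r) \<and> y \<in> S r"
  shows "norm (p n - y) \<le> norm (p l - y)"
  using assms(1) step S
proof (induction n rule: dec_induct)
  case (step r)
  then have "norm (p (Suc r) - y) \<le> norm (p r - y)"
    using closest_point_dist_le[of "S r" y "p r"] by auto
  with step show ?case by simp
qed simp

lemma closest_point_sq_dist_le:
  assumes "convex S" "closed S" "y \<in> S"
  shows "(norm (closest_point S u - y))\<^sup>2 \<le> (norm (u - y))\<^sup>2 - (norm (closest_point S u - u))\<^sup>2"
proof -
  let ?p = "closest_point S u"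
  have "inner (u - ?p) (y - ?p) \<le> 0"
    by (rule closest_point_dot[OF assms])
  moreover have "(norm (u - y))\<^sup>2
      = (norm (u - ?p))\<^sup>2 + (norm (y - ?p))\<^sup>2 - 2 * inner (u - ?p) (y - ?p)"
    using arg_cong[OF diff_diff_eq2[of "u - ?p" ?p y, symmetric], of "\<lambda>t. (norm t)\<^sup>2"]
    by (simp add: power2_norm_eq_inner inner_diff_left inner_diff_right inner_commute)
  ultimately show ?thesis by (simp add: norm_minus_commute)
qed

lemma closest_point_gradient_step:
  assumes "convex S" "closed S" "y \<in> S"
    and p: "p = closest_point S (v - a *\<^sub>R g)"
  shows "(norm (p - y))\<^sup>2 \<le> (norm (v - y))\<^sup>2 - (norm (p - v))\<^sup>2 - 2 * a * (g \<bullet> (p - y))"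
proof -
  have "(norm (p - y))\<^sup>2 \<le> (norm (v - a *\<^sub>R g - y))\<^sup>2 - (norm (p - (v - a *\<^sub>R g)))\<^sup>2"
    unfolding p by (rule closest_point_sq_dist_le[OF assms(1-3)])
  also have "\<dots> = (norm (v - y))\<^sup>2 - (norm (p - v))\<^sup>2 - 2 * a * (g \<bullet> (p - y))"
    by (simp add: power2_norm_eq_inner inner_diff_left inner_diff_right inner_commute algebra_simps)
  finally show ?thesis .
qed

lemma projected_gradient_step_bound:
  fixes f :: "'a::euclidean_space \<Rightarrow> real"
  assumes cf: "convex_on UNIV f"
    and d: "\<And>y. (f has_derivative (\<lambda>h. g y \<bullet> h)) (at y)"
    and lip: "\<And>y w. norm (g y - g w) \<le> L * norm (y - w)"
    and G: "norm (g x) \<le> G"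
    and a: "a > 0" and \<tau>: "\<tau> > 0"
    and S: "convex S" "closed S" "x \<in> S"
    and p: "p = closest_point S (v - a *\<^sub>R g v)"
  shows "(norm (p - x))\<^sup>2
         \<le> (1 + (8 * L\<^sup>2 + 16 * \<tau> * L\<^sup>2) * a\<^sup>2) * (norm (v - x))\<^sup>2
           - 2 * a * (f z - f x)
           - 3 / 4 * (norm (p - v))\<^sup>2
           + (3 / (8 * \<tau>) + 2 * a * L) * (norm (v - z))\<^sup>2
           + (8 * \<tau> + 8) * a\<^sup>2 * G\<^sup>2"
proof -
  have proj: "(norm (p - x))\<^sup>2 \<le> (norm (v - x))\<^sup>2 - (norm (p - v))\<^sup>2 - 2 * a * (g v \<bullet> (p - x))"
    by (rule closest_point_gradient_step[OF S p])
  have conv: "f z - f x \<le> g v \<bullet> (z - x) + L * (norm (v - z))\<^sup>2"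
    by (rule convex_on_lipschitz_gradient_three_point[OF cf d lip])
  have young_z: "2 * a * (g v \<bullet> (z - v))
      \<le> 3 / (8 * \<tau>) * (norm (v - z))\<^sup>2 + 8 * \<tau> / 3 * (a\<^sup>2 * (norm (g v))\<^sup>2)"
    using inner_le_weighted_norms[of "3 / (8 * \<tau>)" "z - v" "a *\<^sub>R g v"] \<tau> a
    by (simp add: norm_minus_commute inner_commute power_mult_distrib field_simps)
  have young_p: "2 * a * (g v \<bullet> (v - p)) \<le> 1 / 4 * (norm (p - v))\<^sup>2 + 4 * (a\<^sup>2 * (norm (g v))\<^sup>2)"
    using inner_le_weighted_norms[of "1 / 4" "v - p" "a *\<^sub>R g v"] a
    by (simp add: norm_minus_commute inner_commute power_mult_distrib field_simps)
  have "a\<^sup>2 * (norm (g v))\<^sup>2 \<le> 2 * (a\<^sup>2 * G\<^sup>2) + 2 * (L\<^sup>2 * a\<^sup>2 * (norm (v - x))\<^sup>2)"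
    using mult_left_mono[OF lipschitz_norm_sq_le[OF lip G, of v], of "a\<^sup>2"]
    by (simp add: algebra_simps)
  then have "(8 * \<tau> / 3 + 4) * (a\<^sup>2 * (norm (g v))\<^sup>2)
      \<le> (8 * \<tau> / 3 + 4) * (2 * (a\<^sup>2 * G\<^sup>2) + 2 * (L\<^sup>2 * a\<^sup>2 * (norm (v - x))\<^sup>2))"
    using \<tau> by (intro mult_left_mono) auto
  also have "\<dots> = (16 * \<tau> / 3 + 8) * (a\<^sup>2 * G\<^sup>2) + (16 * \<tau> / 3 + 8) * (L\<^sup>2 * a\<^sup>2 * (norm (v - x))\<^sup>2)"
    by (simp add: algebra_simps)
  also have "\<dots> \<le> (8 * \<tau> + 8) * (a\<^sup>2 * G\<^sup>2) + (8 + 16 * \<tau>) * (L\<^sup>2 * a\<^sup>2 * (norm (v - x))\<^sup>2)"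
    by (rule add_mono[OF mult_right_mono mult_right_mono]) (use \<tau> in simp_all)
  finally have grad_sq: "(8 * \<tau> / 3 + 4) * (a\<^sup>2 * (norm (g v))\<^sup>2)
      \<le> (8 * \<tau> + 8) * (a\<^sup>2 * G\<^sup>2) + (8 + 16 * \<tau>) * (L\<^sup>2 * a\<^sup>2 * (norm (v - x))\<^sup>2)" .
  have "(norm (p - x))\<^sup>2 \<le> (norm (v - x))\<^sup>2 - 3 / 4 * (norm (p - v))\<^sup>2 - 2 * a * (f z - f x)
      + (3 / (8 * \<tau>) + 2 * a * L) * (norm (v - z))\<^sup>2
      + (8 * \<tau> + 8) * (a\<^sup>2 * G\<^sup>2) + (8 + 16 * \<tau>) * (L\<^sup>2 * a\<^sup>2 * (norm (v - x))\<^sup>2)"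
  proof -
    have "2 * a * (g v \<bullet> (p - x))
        = 2 * a * (g v \<bullet> (z - x)) - 2 * a * (g v \<bullet> (z - v)) - 2 * a * (g v \<bullet> (v - p))"
      by (simp add: inner_diff_right algebra_simps)
    moreover have "2 * a * (f z - f x) \<le> 2 * a * (g v \<bullet> (z - x)) + 2 * a * L * (norm (v - z))\<^sup>2"
      using mult_left_mono[OF conv, of "2 * a"] a by (simp add: algebra_simps)
    ultimately show ?thesis
      using proj young_z young_p grad_sq by (simp add: distrib_right)
  qed
  then show ?thesis by (simp add: algebra_simps)
qed

theorem lemma8:
  fixes m :: nat and J :: "nat set" and I :: "nat \<Rightarrow> nat set"
    and Xs :: "nat \<Rightarrow> 'a::euclidean_space set"
    and f :: "nat \<Rightarrow> 'a \<Rightarrow> real" and gf :: "nat \<Rightarrow> 'a \<Rightarrow> 'a"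
    and L Gf :: real
    and W :: "nat \<Rightarrow> nat \<Rightarrow> nat \<Rightarrow> real" and \<alpha> :: "nat \<Rightarrow> real" and b :: nat
    and \<Omega> :: "nat \<Rightarrow> nat \<Rightarrow> nat \<Rightarrow> nat"
    and x v :: "nat \<Rightarrow> nat \<Rightarrow> 'a" and \<psi> :: "nat \<Rightarrow> nat \<Rightarrow> nat \<Rightarrow> 'a"
    and \<tau> :: real and xc z :: 'a and i k :: nat
  defines "X \<equiv> \<Inter>j\<in>J. Xs j"
  assumes J_fin: "finite J"
    and part_sub: "\<forall>i\<in>{1..m}. I i \<subseteq> J \<and> I i \<noteq> {}"
    and part_disj: "\<forall>i1\<in>{1..m}. \<forall>i2\<in>{1..m}. i1 \<noteq> i2 \<longrightarrow> I i1 \<inter> I i2 = {}"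
    and part_cover: "(\<Union>i\<in>{1..m}. I i) = J"
    and Xs_closed: "\<forall>j\<in>J. closed (Xs j)"
    and Xs_convex: "\<forall>j\<in>J. convex (Xs j)"
    and f_convex: "\<forall>i\<in>{1..m}. convex_on UNIV (f i)"
    and f_grad: "\<forall>i\<in>{1..m}. \<forall>y. (f i has_derivative (\<lambda>h. gf i y \<bullet> h)) (at y)"
    and grad_lip: "\<forall>i\<in>{1..m}. \<forall>y w. norm (gf i y - gf i w) \<le> L * norm (y - w)"
    and grad_bdd: "\<forall>i\<in>{1..m}. \<forall>y\<in>X. norm (gf i y) \<le> Gf"
    and alpha_pos: "\<forall>k. \<alpha> k > 0"
    and b_pos: "b \<ge> 1"
    and Omega_in: "\<forall>i\<in>{1..m}. \<forall>r\<in>{1..b}. \<forall>k. \<Omega> i r k \<in> I i"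
    and v_eq: "\<forall>i\<in>{1..m}. \<forall>k. v i k = (\<Sum>j\<in>{1..m}. W k i j *\<^sub>R x j k)"
    and psi0_eq: "\<forall>i\<in>{1..m}. \<forall>k. \<psi> i 0 k = v i k - \<alpha> k *\<^sub>R gf i (v i k)"
    and psi_eq: "\<forall>i\<in>{1..m}. \<forall>r\<in>{1..b}. \<forall>k.
                   \<psi> i r k = closest_point (Xs (\<Omega> i r k)) (\<psi> i (r - 1) k)"
    and x_eq: "\<forall>i\<in>{1..m}. \<forall>k. x i (Suc k) = \<psi> i b k"
    and tau_pos: "\<tau> > 0"
    and xc_in: "xc \<in> X"
    and i_in: "i \<in> {1..m}"
  shows "(norm (x i (Suc k) - xc))\<^sup>2
         \<le> (1 + (8 * L\<^sup>2 + 16 * \<tau> * L\<^sup>2) * (\<alpha> k)\<^sup>2) * (norm (v i k - xc))\<^sup>2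
           - 2 * \<alpha> k * (f i z - f i xc)
           - 3 / 4 * (norm (\<psi> i 1 k - v i k))\<^sup>2
           + (3 / (8 * \<tau>) + 2 * \<alpha> k * L) * (norm (v i k - z))\<^sup>2
           + (8 * \<tau> + 8) * (\<alpha> k)\<^sup>2 * Gf\<^sup>2"
proof -
  have S: "convex (Xs (\<Omega> i r k)) \<and> closed (Xs (\<Omega> i r k)) \<and> xc \<in> Xs (\<Omega> i r k)"
    if "r \<in> {1..b}" for r
    using Omega_in part_sub Xs_convex Xs_closed xc_in i_in that unfolding X_def by blast
  have "norm (\<psi> i b k - xc) \<le> norm (\<psi> i 1 k - xc)"
    by (rule closest_point_iterates_dist_le[where S = "\<lambda>r. Xs (\<Omega> i (Suc r) k)"])
      (use b_pos psi_eq i_in S in auto)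
  then have "(norm (x i (Suc k) - xc))\<^sup>2 \<le> (norm (\<psi> i 1 k - xc))\<^sup>2"
    using x_eq i_in by (simp add: power_mono)
  also have "\<dots> \<le> (1 + (8 * L\<^sup>2 + 16 * \<tau> * L\<^sup>2) * (\<alpha> k)\<^sup>2) * (norm (v i k - xc))\<^sup>2
           - 2 * \<alpha> k * (f i z - f i xc)
           - 3 / 4 * (norm (\<psi> i 1 k - v i k))\<^sup>2
           + (3 / (8 * \<tau>) + 2 * \<alpha> k * L) * (norm (v i k - z))\<^sup>2
           + (8 * \<tau> + 8) * (\<alpha> k)\<^sup>2 * Gf\<^sup>2"
  proof (rule projected_gradient_step_bound)
    show "\<psi> i 1 k = closest_point (Xs (\<Omega> i 1 k)) (v i k - \<alpha> k *\<^sub>R gf i (v i k))"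
      using psi_eq psi0_eq i_in b_pos by auto
  qed (use f_convex f_grad grad_lip grad_bdd alpha_pos tau_pos xc_in i_in S[of 1] b_pos in auto)
  finally show ?thesis .
qed

end
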